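(* Let $\widehat{A}=A+\epsilon B$ and $\widehat{C}=C+\epsilon D$ with $A,B,C,D\in\mathbb{R}^{n\times n}$ be such that the dual group generalized inverses of $\widehat{A}$, $\widehat{C}$ and $\widehat{A}\widehat{C}$ exist and have the particular form $\widehat{A}^{\#}=A^{\#}-\epsilon A^{\#}BA^{\#}$, $\widehat{C}^{\#}=C^{\#}-\epsilon C^{\#}DC^{\#}$, $(\widehat{A}\widehat{C})^{\#}=(AC)^{\#}-\epsilon (AC)^{\#}(AD+BC)(AC)^{\#}$. If $AC=CA$, $C^{\#}B=BC^{\#}$ and $A^{\#}D=DA^{\#}$, then $(\widehat{A}\widehat{C})^{\#}=\widehat{A}^{\#}\widehat{C}^{\#}=\widehat{C}^{\#}\widehat{A}^{\#}$.
   Context: A dual number is $a+\epsilon b$ with $a,b\in\mathbb{R}$, where $\epsilon\neq 0$, $\epsilon^2=0$ and $\epsilon$ commutes with reals. A dual matrix is $A+\epsilon B$ with $A,B$ real; sums and products are computed formally using $\epsilon^2=0$ (so $(A+\epsilon B)(C+\epsilon D)=AC+\epsilon(AD+BC)$), and equality means equality of real and dual parts. For a real square matrix $A$, $A^{\#}$ denotes its group inverse. For a square dual matrix $\widehat{A}$ of dual index $1$ (i.e., $R(\widehat{A})=R(\widehat{A}^2)$ over dual vectors), its dual group generalized inverse (DGGI) $\widehat{A}^{\#}$ is the unique dual matrix $\widehat{X}$ (if it exists) with $\widehat{A}\widehat{X}\widehat{A}=\widehat{A}$, $\widehat{X}\widehat{A}\widehat{X}=\widehat{X}$, $\widehat{A}\widehat{X}=\widehat{X}\widehat{A}$.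 *)

theory Defs
  imports "HOL-Analysis.Analysis"
begin

text \<open>Real n x n matrices are represented as real^'n^'n.  A dual matrix
  A + eps B is represented by the pair (A, B): first component = real (standard)
  part, second component = dual part.\<close>

type_synonym 'n dmat = "(real^'n^'n) \<times> (real^'n^'n)"

definition dmult :: "'n::finite dmat \<Rightarrow> 'n dmat \<Rightarrow> 'n dmat" where
  "dmult P Q = (fst P ** fst Q, fst P ** snd Q + snd P ** fst Q)"

definition is_group_inverse :: "real^'n::finite^'n \<Rightarrow> real^'n^'n \<Rightarrow> bool" where
  "is_group_inverse A X \<longleftrightarrow> A ** X ** A = A \<and> X ** A ** X = X \<and> A ** X = X ** A"

definition has_group_inverse :: "real^'n::finite^'n \<Rightarrow> bool" where
  "has_group_inverse A \<longleftrightarrow> (\<exists>X. is_group_inverse A X)"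

definition group_inv :: "real^'n::finite^'n \<Rightarrow> real^'n^'n" where
  "group_inv A = (THE X. is_group_inverse A X)"

definition is_dggi :: "'n::finite dmat \<Rightarrow> 'n dmat \<Rightarrow> bool" where
  "is_dggi P X \<longleftrightarrow> dmult (dmult P X) P = P \<and> dmult (dmult X P) X = X \<and> dmult P X = dmult X P"

definition has_dggi :: "'n::finite dmat \<Rightarrow> bool" where
  "has_dggi P \<longleftrightarrow> (\<exists>X. is_dggi P X)"

definition dggi :: "'n::finite dmat \<Rightarrow> 'n dmat" where
  "dggi P = (THE X. is_dggi P X)"

end

theory Submission imports Defs begin

text \<open>Since \<open>A\<close> and \<open>C\<close> commute, so do all of \<open>A\<close>, \<open>C\<close>, \<open>A\<^sup>#\<close>, \<open>C\<^sup>#\<close>: anything commuting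
  with a matrix commutes with its group inverse. Hence \<open>A\<^sup>#C\<^sup>#\<close> satisfies the three defining
  equations of \<open>(AC)\<^sup>#\<close>, so the standard parts of the three dual matrices agree. For the
  dual parts, the hypotheses \<open>C\<^sup>#B = BC\<^sup>#\<close> and \<open>A\<^sup>#D = DA\<^sup>#\<close> let \<open>A\<^sup>#\<close> and \<open>C\<^sup>#\<close> be moved past
  \<open>D\<close> and \<open>B\<close>, and \<open>(AC)\<^sup>#(AD + BC)(AC)\<^sup>#\<close> collapses to \<open>A\<^sup>#BA\<^sup>#C\<^sup># + A\<^sup>#C\<^sup>#DC\<^sup>#\<close>,
  which up to sign is the dual part of either product \<open>A\<^sup>#C\<^sup>#\<close>, \<open>C\<^sup>#A\<^sup>#\<close> of the dual inverses.\<close>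

lemma matrix_mul_neg_right: "(X::real^'n::finite^'m) ** (- Y) = - (X ** Y)"
  by (simp add: matrix_matrix_mult_def vec_eq_iff sum_negf)

lemma matrix_mul_neg_left: "(- X::real^'n::finite^'m) ** Y = - (X ** Y)"
  by (simp add: matrix_matrix_mult_def vec_eq_iff sum_negf)

lemma matrix_add_rdistrib: "((X::real^'n::finite^'m) + Y) ** Z = X ** Z + Y ** Z"
  by (simp add: matrix_matrix_mult_def vec_eq_iff sum.distrib distrib_right)

lemma is_group_inverse_unique:
  assumes "is_group_inverse A X" "is_group_inverse A Y"
  shows "X = Y"
proof -
  have X: "A ** X ** A = A" "X ** A ** X = X" "A ** X = X ** A"
    and Y: "A ** Y ** A = A" "Y ** A ** Y = Y" "A ** Y = Y ** A"
    using assms unfolding is_group_inverse_def by auto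
  have AAX: "A ** (A ** X) = A" using X by (metis matrix_mul_assoc)
  have "A ** X = (A ** Y ** A) ** X" using Y by simp
  also have "\<dots> = Y ** (A ** (A ** X))" using Y by (metis matrix_mul_assoc)
  also have "\<dots> = A ** Y" using AAX Y by simp
  finally have AX: "A ** X = A ** Y" .
  have "X = X ** (A ** X)" using X by (metis matrix_mul_assoc)
  also have "\<dots> = (A ** X) ** Y" using AX X by (metis matrix_mul_assoc)
  also have "\<dots> = Y" using AX Y by (metis matrix_mul_assoc)
  finally show ?thesis .
qed

lemma group_inv_eqI: "is_group_inverse A X \<Longrightarrow> group_inv A = X"
  unfolding group_inv_def by (blast intro: is_group_inverse_unique)

lemma is_group_inverse_group_inv:
  "has_group_inverse A \<Longrightarrow> is_group_inverse A (group_inv A)"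
  unfolding has_group_inverse_def using group_inv_eqI by blast

lemma matrix_mul_left_commute:
  fixes X Y :: "real^'n::finite^'n" and Z :: "real^'m::finite^'n"
  assumes "X ** Y = Y ** X"
  shows "X ** (Y ** Z) = Y ** (X ** Z)"
  using assms by (metis matrix_mul_assoc)

lemma group_inverse_commute:
  fixes A G X :: "real^'n::finite^'n"
  assumes "is_group_inverse A G" and XA: "X ** A = A ** X"
  shows "X ** G = G ** X"
proof -
  have AGA: "A ** G ** A = A" and GAG: "G ** A ** G = G" and AG: "A ** G = G ** A"
    using assms(1) unfolding is_group_inverse_def by auto
  have GGA: "G ** (G ** (A ** Z)) = G ** Z" for Z :: "real^'m::finite^'n"
    using GAG AG by (metis matrix_mul_assoc)
  have AGG: "A ** (G ** G) = G" using GAG AG by (metis matrix_mul_assoc)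
  note swap = XA matrix_mul_left_commute[OF XA]
  have "G ** X = G ** G ** A ** X" by (simp only: matrix_mul_assoc[symmetric] GGA)
  also have "\<dots> = G ** G ** X ** A" by (simp only: matrix_mul_assoc[symmetric] swap)
  also have "\<dots> = G ** G ** X ** (A ** G ** A)" by (simp only: AGA)
  also have "\<dots> = G ** G ** A ** X ** G ** A" by (simp only: matrix_mul_assoc[symmetric] swap)
  also have "\<dots> = G ** X ** A ** G" by (simp only: matrix_mul_assoc[symmetric] GGA AG)
  finally have left: "G ** X = G ** X ** A ** G" .
  have "X ** G = X ** A ** G ** G" by (simp only: matrix_mul_assoc[symmetric] AGG)
  also have "\<dots> = A ** X ** G ** G" by (simp only: matrix_mul_assoc[symmetric] swap)
  also have "\<dots> = (A ** G ** A) ** X ** G ** G" by (simp only: AGA)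
  also have "\<dots> = A ** G ** X ** A ** G ** G" by (simp only: matrix_mul_assoc[symmetric] swap)
  also have "\<dots> = A ** G ** X ** G" by (simp only: matrix_mul_assoc[symmetric] AGG)
  finally have right: "X ** G = A ** G ** X ** G" .
  have "G ** X ** A ** G = A ** G ** X ** G"
    by (simp only: matrix_mul_assoc[symmetric] swap AG matrix_mul_left_commute[OF AG])
  then show ?thesis using left right by simp
qed

lemma group_inverses_commute:
  fixes A C a c :: "real^'n::finite^'n"
  assumes ia: "is_group_inverse A a" and ic: "is_group_inverse C c" and AC: "A ** C = C ** A"
  shows "c ** A = A ** c" and "C ** a = a ** C" and "c ** a = a ** c"
proof -
  show "c ** A = A ** c" using group_inverse_commute[OF ic] AC by simp
  show aC: "C ** a = a ** C" using group_inverse_commute[OF ia] AC by simp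
  show "c ** a = a ** c" using group_inverse_commute[OF ic] aC by simp
qed

lemma is_group_inverse_mult_commuting:
  assumes ia: "is_group_inverse A a" and ic: "is_group_inverse C c" and AC: "A ** C = C ** A"
  shows "is_group_inverse (A ** C) (a ** c)"
proof -
  have a: "A ** a ** A = A" "a ** A ** a = a" "A ** a = a ** A"
    and c: "C ** c ** C = C" "c ** C ** c = c" "C ** c = c ** C"
    using ia ic unfolding is_group_inverse_def by auto
  have comm: "A ** a = a ** A" "c ** a = a ** c" "C ** a = a ** C"
    "c ** A = A ** c" "C ** A = A ** C" "C ** c = c ** C"
    using a c AC group_inverses_commute[OF ia ic AC] by simp_all
  \<comment> \<open>oriented so that \<open>simp\<close> sorts every product into the letter order \<open>a, A, c, C\<close>\<close>
  note sort = comm comm[THEN matrix_mul_left_commute] matrix_mul_assoc[symmetric]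
  have "A ** C ** (a ** c) ** (A ** C) = (A ** a ** A) ** (C ** c ** C)"
    by (simp only: sort)
  moreover have "a ** c ** (A ** C) ** (a ** c) = (a ** A ** a) ** (c ** C ** c)"
    by (simp only: sort)
  moreover have "A ** C ** (a ** c) = a ** c ** (A ** C)"
    by (simp only: sort)
  ultimately show ?thesis using a c unfolding is_group_inverse_def by simp
qed

lemma group_inv_mult_commuting:
  assumes "has_group_inverse A" "has_group_inverse C" "A ** C = C ** A"
  shows "group_inv (A ** C) = group_inv A ** group_inv C"
  using assms by (intro group_inv_eqI is_group_inverse_mult_commuting is_group_inverse_group_inv)

lemma dual_part_identities_commuting:
  fixes A B C D a c :: "real^'n::finite^'n"
  assumes ia: "is_group_inverse A a" and ic: "is_group_inverse C c" and AC: "A ** C = C ** A"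
    and cB: "c ** B = B ** c" and aD: "a ** D = D ** a"
  shows "a ** c ** (A ** D + B ** C) ** (a ** c) = a ** B ** a ** c + a ** c ** D ** c"
    and "c ** a ** B ** a = a ** B ** a ** c"
    and "c ** D ** c ** a = a ** c ** D ** c"
proof -
  have aAa: "a ** A ** a = a" and cCc: "c ** C ** c = c"
    using ia ic unfolding is_group_inverse_def by auto
  have comm: "c ** a = a ** c" "A ** a = a ** A" "C ** a = a ** C" "D ** a = a ** D"
    "c ** A = A ** c" "c ** B = B ** c"
    using ia group_inverses_commute[OF ia ic AC] cB aD
    unfolding is_group_inverse_def by simp_all
  \<comment> \<open>\<open>simp\<close> moves \<open>a\<close> to the left and \<open>c\<close> to the right as far as these allow\<close>
  note sort = comm comm[THEN matrix_mul_left_commute] matrix_mul_assoc[symmetric]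
  have "a ** c ** A ** D ** a ** c = (a ** A ** a) ** c ** D ** c"
    by (simp only: sort)
  then have AD: "a ** c ** A ** D ** a ** c = a ** c ** D ** c" using aAa by simp
  have "a ** c ** B ** C ** a ** c = a ** B ** a ** (c ** C ** c)"
    by (simp only: sort)
  then have BC: "a ** c ** B ** C ** a ** c = a ** B ** a ** c" using cCc by simp
  show "a ** c ** (A ** D + B ** C) ** (a ** c) = a ** B ** a ** c + a ** c ** D ** c"
    using AD BC by (simp add: matrix_add_ldistrib matrix_add_rdistrib matrix_mul_assoc)
  show "c ** a ** B ** a = a ** B ** a ** c" by (simp only: sort)
  show "c ** D ** c ** a = a ** c ** D ** c" by (simp only: sort)
qed

definition dggi_formula :: "'n::finite dmat \<Rightarrow> 'n dmat" where
  "dggi_formula P = (group_inv (fst P), - (group_inv (fst P) ** snd P ** group_inv (fst P)))"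

lemma dggi_formula_dmult_commuting:
  fixes A B C D :: "real^'n::finite^'n"
  assumes gA: "has_group_inverse A" and gC: "has_group_inverse C" and AC: "A ** C = C ** A"
    and hB: "group_inv C ** B = B ** group_inv C" and hD: "group_inv A ** D = D ** group_inv A"
  shows "dggi_formula (dmult (A, B) (C, D)) = dmult (dggi_formula (A, B)) (dggi_formula (C, D))"
    and "dmult (dggi_formula (A, B)) (dggi_formula (C, D))
       = dmult (dggi_formula (C, D)) (dggi_formula (A, B))"
proof -
  define a c where "a = group_inv A" and "c = group_inv C"
  have ia: "is_group_inverse A a" and ic: "is_group_inverse C c"
    using gA gC is_group_inverse_group_inv a_def c_def by blast+
  note dual = dual_part_identities_commuting[OF ia ic AC hB[folded c_def] hD[folded a_def]]
  let ?dual = "a ** B ** a ** c + a ** c ** D ** c"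
  have AC_form: "dggi_formula (dmult (A, B) (C, D)) = (a ** c, - ?dual)"
    using dual(1) by (simp add: dggi_formula_def dmult_def group_inv_mult_commuting[OF gA gC AC]
        a_def c_def)
  have AC_prod: "dmult (dggi_formula (A, B)) (dggi_formula (C, D)) = (a ** c, - ?dual)"
    by (simp add: dggi_formula_def dmult_def a_def c_def matrix_mul_neg_left matrix_mul_neg_right
        matrix_mul_assoc)
  have CA_prod: "dmult (dggi_formula (C, D)) (dggi_formula (A, B)) = (a ** c, - ?dual)"
    using group_inverses_commute(3)[OF ia ic AC] dual(2,3)
    by (simp add: dggi_formula_def dmult_def a_def c_def matrix_mul_neg_left matrix_mul_neg_right
        matrix_mul_assoc)
  show "dggi_formula (dmult (A, B) (C, D)) = dmult (dggi_formula (A, B)) (dggi_formula (C, D))"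
    using AC_form AC_prod by simp
  show "dmult (dggi_formula (A, B)) (dggi_formula (C, D))
      = dmult (dggi_formula (C, D)) (dggi_formula (A, B))"
    using AC_prod CA_prod by simp
qed

theorem mainTheorem6:
  fixes A B C D :: "real^'n::finite^'n"
  assumes gA: "has_group_inverse A"
      and gC: "has_group_inverse C"
      and gAC: "has_group_inverse (A ** C)"
      and dA: "has_dggi (A, B)"
      and dC: "has_dggi (C, D)"
      and dAC: "has_dggi (dmult (A, B) (C, D))"
      and fA: "dggi (A, B) = (group_inv A, - (group_inv A ** B ** group_inv A))"
      and fC: "dggi (C, D) = (group_inv C, - (group_inv C ** D ** group_inv C))"
      and fAC: "dggi (dmult (A, B) (C, D)) =
                 (group_inv (A ** C),
                  - (group_inv (A ** C) ** (A ** D + B ** C) ** group_inv (A ** C)))"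
      and comm: "A ** C = C ** A"
      and h1: "group_inv C ** B = B ** group_inv C"
      and h2: "group_inv A ** D = D ** group_inv A"
  shows "dggi (dmult (A, B) (C, D)) = dmult (dggi (A, B)) (dggi (C, D))
       \<and> dmult (dggi (A, B)) (dggi (C, D)) = dmult (dggi (C, D)) (dggi (A, B))"
proof -
  have "dggi (A, B) = dggi_formula (A, B)" "dggi (C, D) = dggi_formula (C, D)"
    "dggi (dmult (A, B) (C, D)) = dggi_formula (dmult (A, B) (C, D))"
    using fA fC fAC by (simp_all add: dggi_formula_def dmult_def)
  then show ?thesis using dggi_formula_dmult_commuting[OF gA gC comm h1 h2] by simp
qed

end
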